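(* Let $*$ be a rank-one preserving product on the space $M_{n\times m}(\mathbb{C})$ of $n\times m$ complex matrices, and write its identity element as $e f^*$ with $e\in\mathbb{C}^n$, $f\in\mathbb{C}^m$. Then for all $v\in\mathbb{C}^n$ and $w\in\mathbb{C}^m$, $$ v f^* * e w^* \;=\; e w^* * v f^* \;=\; v w^*. $$
   Context: A rank-one preserving product (ropp) on $M_{n\times m}(\mathbb{C})$ is an associative bilinear product $*$ on $M_{n\times m}(\mathbb{C})$ which has an identity element of rank one and such that the $*$-product of any two rank-one matrices has rank at most one. Here $u^*$ denotes the conjugate transpose of a column vector $u$, so $vw^*$ is the $n\times m$ matrix $v\overline{w}^{T}$. *)

theory Defs
  imports "Jordan_Normal_Form.DL_Rank"
begin

text \<open>Matrices in M_{n x m}(C) are represented as complex matrices in carrier_mat n m.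
  The outer product v w^* (v in C^n, w in C^m) is the n x m matrix with entries v_i * cnj (w_j).\<close>

definition outer :: "complex vec \<Rightarrow> complex vec \<Rightarrow> complex mat" where
  "outer v w = mat (dim_vec v) (dim_vec w) (\<lambda>(i, j). v $ i * cnj (w $ j))"

definition crank :: "nat \<Rightarrow> complex mat \<Rightarrow> nat" where
  "crank n A = vec_space.rank n A"

definition cbilinear_on :: "nat \<Rightarrow> nat \<Rightarrow> (complex mat \<Rightarrow> complex mat \<Rightarrow> complex mat) \<Rightarrow> bool" where
  "cbilinear_on n m p \<longleftrightarrow>
     (\<forall>A \<in> carrier_mat n m. \<forall>B \<in> carrier_mat n m. p A B \<in> carrier_mat n m) \<and>
     (\<forall>A \<in> carrier_mat n m. \<forall>B \<in> carrier_mat n m. \<forall>C \<in> carrier_mat n m. \<forall>c :: complex.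
        p (A + B) C = p A C + p B C \<and> p A (B + C) = p A B + p A C \<and>
        p (c \<cdot>\<^sub>m A) B = c \<cdot>\<^sub>m p A B \<and> p A (c \<cdot>\<^sub>m B) = c \<cdot>\<^sub>m p A B)"

definition ropp :: "nat \<Rightarrow> nat \<Rightarrow> (complex mat \<Rightarrow> complex mat \<Rightarrow> complex mat) \<Rightarrow> bool" where
  "ropp n m p \<longleftrightarrow>
     cbilinear_on n m p \<and>
     (\<forall>A \<in> carrier_mat n m. \<forall>B \<in> carrier_mat n m. \<forall>C \<in> carrier_mat n m.
        p (p A B) C = p A (p B C)) \<and>
     (\<exists>E \<in> carrier_mat n m. crank n E = 1 \<and>
        (\<forall>A \<in> carrier_mat n m. p E A = A \<and> p A E = A)) \<and>
     (\<forall>A \<in> carrier_mat n m. \<forall>B \<in> carrier_mat n m.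
        crank n A = 1 \<longrightarrow> crank n B = 1 \<longrightarrow> crank n (p A B) \<le> 1)"

end

theory Submission
  imports Defs "Jordan_Normal_Form.DL_Rank_Submatrix"
begin

text \<open>Write \<open>\<Phi>(x, y) = x f\<^sup>* * e y\<^sup>*\<close>. It is linear in \<open>x\<close>, conjugate-linear in \<open>y\<close>, and
  \<open>\<Phi>(e, y) = e y\<^sup>*\<close>, \<open>\<Phi>(x, f) = x f\<^sup>*\<close>; so it suffices to treat \<open>v\<close>, \<open>w\<close> vanishing at
  coordinates \<open>i\<^sub>0\<close>, \<open>j\<^sub>0\<close> where \<open>e\<close> and \<open>f\<close> do not. Put \<open>B = \<Phi>(v, w)\<close>. The matrices
  \<open>v f\<^sup>* + t B = \<Phi>(v, f + cnj t \<cdot> w)\<close>, \<open>e w\<^sup>* + s B = \<Phi>(e + s v, w)\<close> and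
  \<open>e (f + w)\<^sup>* + s (v f\<^sup>* + B) = \<Phi>(e + s v, f + w)\<close> are products of two rank-one matrices, so
  all their 2\<times>2 minors vanish for every \<open>s\<close>, \<open>t\<close>. The coefficients of \<open>s\<close> and \<open>t\<close> in these
  minors give \<open>B = v w\<^sup>* + \<lambda> e f\<^sup>*\<close>, and a minor of \<open>B = \<Phi>(v, w)\<close> itself forces \<open>\<lambda> = 0\<close>.
  The second identity is the first one for the opposite product.\<close>

lemma vec_neq_zero_iff:
  assumes "x \<in> carrier_vec n"
  shows "x \<noteq> 0\<^sub>v n \<longleftrightarrow> (\<exists>i<n. x $ i \<noteq> 0)"
  using assms by (auto intro!: eq_vecI)

lemma outer_carrier [simp]:
  "x \<in> carrier_vec n \<Longrightarrow> y \<in> carrier_vec m \<Longrightarrow> outer x y \<in> carrier_mat n m"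
  unfolding outer_def by auto

lemma outer_index [simp]:
  "i < dim_vec x \<Longrightarrow> j < dim_vec y \<Longrightarrow> outer x y $$ (i, j) = x $ i * cnj (y $ j)"
  unfolding outer_def by auto

lemma outer_dims [simp]: "dim_row (outer x y) = dim_vec x" "dim_col (outer x y) = dim_vec y"
  unfolding outer_def by auto

lemma outer_zero_left: "y \<in> carrier_vec m \<Longrightarrow> outer (0\<^sub>v n) y = 0\<^sub>m n m"
  by (rule eq_matI) auto

lemma outer_zero_right: "x \<in> carrier_vec n \<Longrightarrow> outer x (0\<^sub>v m) = 0\<^sub>m n m"
  by (rule eq_matI) auto

lemma outer_add_left: "dim_vec x = dim_vec x' \<Longrightarrow> outer (x + x') y = outer x y + outer x' y"
  by (rule eq_matI) (auto simp: algebra_simps)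

lemma outer_add_right: "dim_vec y = dim_vec y' \<Longrightarrow> outer x (y + y') = outer x y + outer x y'"
  by (rule eq_matI) (auto simp: algebra_simps)

lemma outer_smult_left: "outer (c \<cdot>\<^sub>v x) y = c \<cdot>\<^sub>m outer x y"
  by (rule eq_matI) (auto simp: algebra_simps)

lemma outer_smult_right: "outer x (c \<cdot>\<^sub>v y) = cnj c \<cdot>\<^sub>m outer x y"
  by (rule eq_matI) (auto simp: algebra_simps)

lemma crank_zero_mat: "crank n (0\<^sub>m n m) = 0"
  unfolding crank_def by (rule vec_space.rank_0I)

lemma crank_outer:
  assumes x: "x \<in> carrier_vec n" "x \<noteq> 0\<^sub>v n" and y: "y \<in> carrier_vec m" "y \<noteq> 0\<^sub>v m"
  shows "crank n (outer x y) = 1"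
proof -
  obtain i j where i: "i < n" "x $ i \<noteq> 0" and j: "j < m" "y $ j \<noteq> 0"
    using x y vec_neq_zero_iff by metis
  have A: "outer x y \<in> carrier_mat n m" using x y by simp
  have "crank n (outer x y) \<le> 1" unfolding crank_def
    by (rule vec_space.rank_le_1_product_entries[OF A, of "\<lambda>r. x $ r" "\<lambda>c. cnj (y $ c)"])
      (use x y in auto)
  moreover
  have I: "{a. a < n \<and> a \<in> {i}} = {i}" and J: "{a. a < m \<and> a \<in> {j}} = {j}" using i j by auto
  have S: "submatrix (outer x y) {i} {j} \<in> carrier_mat 1 1"
    unfolding submatrix_def using x y I J by simp
  have "submatrix (outer x y) {i} {j} $$ (0, 0) = x $ i * cnj (y $ j)"
    using submatrix_index[of 0 "outer x y" "{i}" 0 "{j}"] x y i j I J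
    by (simp add: Least_equality)
  then have "det (submatrix (outer x y) {i} {j}) \<noteq> 0"
    using det_single[OF S] i j by simp
  from vec_space.rank_gt_minor[OF A this] have "1 \<le> crank n (outer x y)"
    unfolding crank_def J by simp
  ultimately show ?thesis by simp
qed

lemma det_2x2:
  fixes A :: "'a :: comm_ring_1 mat"
  assumes "A \<in> carrier_mat 2 2"
  shows "det A = A $$ (0, 0) * A $$ (1, 1) - A $$ (0, 1) * A $$ (1, 0)"
proof -
  have "det A = (\<Sum>j<2. A $$ (0, j) * cofactor A 0 j)"
    by (rule laplace_expansion_row[OF assms]) simp
  also have "\<dots> = A $$ (0, 0) * cofactor A 0 0 + A $$ (0, 1) * cofactor A 0 1"
    by (simp add: numeral_2_eq_2)
  also have "cofactor A 0 0 = A $$ (1, 1)"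
    using assms unfolding cofactor_def
    by (subst det_single) (auto simp: mat_delete_def numeral_2_eq_2)
  also have "cofactor A 0 1 = - A $$ (1, 0)"
    using assms unfolding cofactor_def
    by (subst det_single) (auto simp: mat_delete_def numeral_2_eq_2)
  finally show ?thesis by simp
qed

lemma crank_le_1_minor_ordered:
  fixes A :: "complex mat"
  assumes A: "A \<in> carrier_mat n m" and r: "crank n A \<le> 1"
    and ik: "i < k" "k < n" and jl: "j < l" "l < m"
  shows "A $$ (i, j) * A $$ (k, l) = A $$ (i, l) * A $$ (k, j)"
proof (rule ccontr)
  let ?S = "submatrix A {i, k} {j, l}"
  have I: "{a. a < n \<and> a \<in> {i, k}} = {i, k}" and J: "{a. a < m \<and> a \<in> {j, l}} = {j, l}"
    using ik jl by auto
  have card: "card {i, k} = 2" "card {j, l} = 2" using ik jl by auto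
  have S: "?S \<in> carrier_mat 2 2" unfolding submatrix_def using A I J card by simp
  have pick0: "pick {i, k} 0 = i" "pick {j, l} 0 = j"
    using ik jl by (auto intro!: Least_equality)
  have pick1: "pick {i, k} (Suc 0) = k" "pick {j, l} (Suc 0) = l"
    using ik jl pick0 by (auto intro!: Least_equality)
  have "?S $$ (a, b) = A $$ (pick {i, k} a, pick {j, l} b)" if "a < 2" "b < 2" for a b
    using submatrix_index[of a A "{i, k}" b "{j, l}"] A I J card that by simp
  then have "det ?S = A $$ (i, j) * A $$ (k, l) - A $$ (i, l) * A $$ (k, j)"
    by (simp add: det_2x2[OF S] pick0 pick1 del: pick.simps)
  moreover assume "A $$ (i, j) * A $$ (k, l) \<noteq> A $$ (i, l) * A $$ (k, j)"
  ultimately have "det ?S \<noteq> 0" by simp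
  from vec_space.rank_gt_minor[OF A this] have "2 \<le> crank n A"
    unfolding crank_def J card by simp
  with r show False by simp
qed

lemma crank_le_1_minor:
  fixes A :: "complex mat"
  assumes A: "A \<in> carrier_mat n m" and r: "crank n A \<le> 1"
    and "i < n" "k < n" "j < m" "l < m"
  shows "A $$ (i, j) * A $$ (k, l) = A $$ (i, l) * A $$ (k, j)"
proof -
  note ordered = crank_le_1_minor_ordered[OF A r]
  consider "i = k" | "j = l" | "i < k" "j < l" | "i < k" "l < j" | "k < i" "j < l" | "k < i" "l < j"
    by linarith
  then show ?thesis
    by cases (use assms in \<open>metis ordered mult.commute\<close>)+
qed

locale unital_rank_one_preserving =
  fixes n m :: nat and p :: "complex mat \<Rightarrow> complex mat \<Rightarrow> complex mat" and e f :: "complex vec"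
  assumes bilinear: "cbilinear_on n m p"
    and e_carrier [simp]: "e \<in> carrier_vec n" and f_carrier [simp]: "f \<in> carrier_vec m"
    and unit: "\<forall>A \<in> carrier_mat n m. p (outer e f) A = A \<and> p A (outer e f) = A"
    and crank_unit: "crank n (outer e f) = 1"
    and rank_one_preserving: "\<forall>A \<in> carrier_mat n m. \<forall>B \<in> carrier_mat n m.
      crank n A = 1 \<longrightarrow> crank n B = 1 \<longrightarrow> crank n (p A B) \<le> 1"
begin

lemma dim_vec_unit [simp]: "dim_vec e = n" "dim_vec f = m"
  by auto

lemma p_carrier [simp]: "A \<in> carrier_mat n m \<Longrightarrow> B \<in> carrier_mat n m \<Longrightarrow> p A B \<in> carrier_mat n m"
  using bilinear unfolding cbilinear_on_def by blast

lemma p_dims [simp]: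
  "A \<in> carrier_mat n m \<Longrightarrow> B \<in> carrier_mat n m \<Longrightarrow> dim_row (p A B) = n"
  "A \<in> carrier_mat n m \<Longrightarrow> B \<in> carrier_mat n m \<Longrightarrow> dim_col (p A B) = m"
  by (metis p_carrier carrier_matD(1), metis p_carrier carrier_matD(2))

lemma p_add_left:
  "A \<in> carrier_mat n m \<Longrightarrow> B \<in> carrier_mat n m \<Longrightarrow> C \<in> carrier_mat n m \<Longrightarrow> p (A + B) C = p A C + p B C"
  using bilinear unfolding cbilinear_on_def by blast

lemma p_add_right:
  "A \<in> carrier_mat n m \<Longrightarrow> B \<in> carrier_mat n m \<Longrightarrow> C \<in> carrier_mat n m \<Longrightarrow> p A (B + C) = p A B + p A C"
  using bilinear unfolding cbilinear_on_def by blast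

lemma p_smult_left: "A \<in> carrier_mat n m \<Longrightarrow> B \<in> carrier_mat n m \<Longrightarrow> p (c \<cdot>\<^sub>m A) B = c \<cdot>\<^sub>m p A B"
  using bilinear unfolding cbilinear_on_def by blast

lemma p_smult_right: "A \<in> carrier_mat n m \<Longrightarrow> B \<in> carrier_mat n m \<Longrightarrow> p A (c \<cdot>\<^sub>m B) = c \<cdot>\<^sub>m p A B"
  using bilinear unfolding cbilinear_on_def by blast

lemma p_zero_left:
  assumes "B \<in> carrier_mat n m"
  shows "p (0\<^sub>m n m) B = 0\<^sub>m n m"
proof -
  have "p (0\<^sub>m n m) B = 0 \<cdot>\<^sub>m p (0\<^sub>m n m) B"
    using p_smult_left[of "0\<^sub>m n m" B 0] assms by simp
  also have "\<dots> = 0\<^sub>m n m" using p_carrier[OF zero_carrier_mat assms] by (intro eq_matI) auto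
  finally show ?thesis .
qed

lemma p_zero_right:
  assumes "A \<in> carrier_mat n m"
  shows "p A (0\<^sub>m n m) = 0\<^sub>m n m"
proof -
  have "p A (0\<^sub>m n m) = 0 \<cdot>\<^sub>m p A (0\<^sub>m n m)"
    using p_smult_right[of A "0\<^sub>m n m" 0] assms by simp
  also have "\<dots> = 0\<^sub>m n m" using p_carrier[OF assms zero_carrier_mat] by (intro eq_matI) auto
  finally show ?thesis .
qed

lemma unit_left [simp]: "A \<in> carrier_mat n m \<Longrightarrow> p (outer e f) A = A"
  and unit_right [simp]: "A \<in> carrier_mat n m \<Longrightarrow> p A (outer e f) = A"
  using unit by auto

lemma unit_nonzero: "e \<noteq> 0\<^sub>v n" "f \<noteq> 0\<^sub>v m"
  using crank_unit outer_zero_left[OF f_carrier] outer_zero_right[OF e_carrier] crank_zero_mat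
  by auto

lemma opposite: "unital_rank_one_preserving n m (\<lambda>A B. p B A) e f"
proof unfold_locales
  show "cbilinear_on n m (\<lambda>A B. p B A)"
    using bilinear unfolding cbilinear_on_def by blast
qed (use unit crank_unit rank_one_preserving in auto)

lemma crank_product_outer_le_1:
  assumes "x \<in> carrier_vec n" "x \<noteq> 0\<^sub>v n" "y \<in> carrier_vec m" "y \<noteq> 0\<^sub>v m"
    and "x' \<in> carrier_vec n" "x' \<noteq> 0\<^sub>v n" "y' \<in> carrier_vec m" "y' \<noteq> 0\<^sub>v m"
  shows "crank n (p (outer x y) (outer x' y')) \<le> 1"
  using rank_one_preserving crank_outer assms by simp

lemma product_shift_left:
  assumes "x \<in> carrier_vec n" "y \<in> carrier_vec m"
  shows "p (outer (e + s \<cdot>\<^sub>v x) f) (outer e y) = outer e y + s \<cdot>\<^sub>m p (outer x f) (outer e y)"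
  using assms by (simp add: outer_add_left outer_smult_left p_add_left p_smult_left)

lemma product_shift_right:
  assumes "x \<in> carrier_vec n" "y \<in> carrier_vec m"
  shows "p (outer x f) (outer e (f + cnj t \<cdot>\<^sub>v y)) = outer x f + t \<cdot>\<^sub>m p (outer x f) (outer e y)"
  using assms by (simp add: outer_add_right outer_smult_right p_add_right p_smult_right)

context
  fixes i0 j0 :: nat and v w :: "complex vec"
  assumes i0: "i0 < n" "e $ i0 \<noteq> 0" and j0: "j0 < m" "f $ j0 \<noteq> 0"
    and v: "v \<in> carrier_vec n" "v $ i0 = 0" and w: "w \<in> carrier_vec m" "w $ j0 = 0"
begin

abbreviation B where "B \<equiv> p (outer v f) (outer e w)"

lemma crank_shift_left_le_1:
  assumes "y \<in> carrier_vec m" "y \<noteq> 0\<^sub>v m"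
  shows "crank n (outer e y + s \<cdot>\<^sub>m p (outer v f) (outer e y)) \<le> 1"
proof -
  have "(e + s \<cdot>\<^sub>v v) $ i0 \<noteq> 0" using i0 v by simp
  then have "e + s \<cdot>\<^sub>v v \<noteq> 0\<^sub>v n" using i0 by (metis index_zero_vec(1))
  then show ?thesis
    using crank_product_outer_le_1[of "e + s \<cdot>\<^sub>v v" f e y] product_shift_left[OF v(1) assms(1)]
      assms v unit_nonzero by simp
qed

lemma crank_shift_right_le_1:
  assumes "x \<in> carrier_vec n" "x \<noteq> 0\<^sub>v n"
  shows "crank n (outer x f + t \<cdot>\<^sub>m p (outer x f) (outer e w)) \<le> 1"
proof -
  have "(f + cnj t \<cdot>\<^sub>v w) $ j0 \<noteq> 0" using j0 w by simp
  then have "f + cnj t \<cdot>\<^sub>v w \<noteq> 0\<^sub>v m" using j0 by (metis index_zero_vec(1))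
  then show ?thesis
    using crank_product_outer_le_1[of x f e "f + cnj t \<cdot>\<^sub>v w"] product_shift_right[OF assms(1) w(1)]
      assms w unit_nonzero by simp
qed

lemma B_row_proportional:
  assumes "v \<noteq> 0\<^sub>v n" "c < m"
  shows "B $$ (i0, c) * cnj (f $ j0) = B $$ (i0, j0) * cnj (f $ c)"
proof -
  obtain i1 where i1: "i1 < n" "v $ i1 \<noteq> 0" using assms(1) v(1) vec_neq_zero_iff by blast
  have C: "outer v f + t \<cdot>\<^sub>m B \<in> carrier_mat n m" for t using v w by simp
  have minor: "(v $ i0 * cnj (f $ c) + t * B $$ (i0, c)) * (v $ i1 * cnj (f $ j0) + t * B $$ (i1, j0))
    = (v $ i0 * cnj (f $ j0) + t * B $$ (i0, j0)) * (v $ i1 * cnj (f $ c) + t * B $$ (i1, c))" for t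
    using crank_le_1_minor[OF C crank_shift_right_le_1[OF v(1) assms(1)],
        where i = i0 and k = i1 and j = c and l = j0]
      i0 i1 j0 assms v w by simp
  txt \<open>The minor is quadratic in \<open>t\<close>; its values at \<open>t = \<plusminus>1\<close> isolate the linear coefficient.\<close>
  have "2 * v $ i1 * (B $$ (i0, c) * cnj (f $ j0) - B $$ (i0, j0) * cnj (f $ c)) = 0"
    using minor[of 1] minor[of "-1"] v(2) by Groebner_Basis.algebra
  with i1 show ?thesis by simp
qed

lemma B_col_proportional:
  assumes "w \<noteq> 0\<^sub>v m" "b < n"
  shows "B $$ (b, j0) * e $ i0 = B $$ (i0, j0) * e $ b"
proof -
  obtain j1 where j1: "j1 < m" "w $ j1 \<noteq> 0" using assms(1) w(1) vec_neq_zero_iff by blast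
  have C: "outer e w + s \<cdot>\<^sub>m B \<in> carrier_mat n m" for s using v w by simp
  have minor: "(e $ i0 * cnj (w $ j0) + s * B $$ (i0, j0)) * (e $ b * cnj (w $ j1) + s * B $$ (b, j1))
    = (e $ i0 * cnj (w $ j1) + s * B $$ (i0, j1)) * (e $ b * cnj (w $ j0) + s * B $$ (b, j0))" for s
    using crank_le_1_minor[OF C crank_shift_left_le_1[OF w(1) assms(1)],
        where i = i0 and k = b and j = j0 and l = j1]
      i0 j0 j1 assms v w by simp
  have "2 * cnj (w $ j1) * (B $$ (b, j0) * e $ i0 - B $$ (i0, j0) * e $ b) = 0"
    using minor[of 1] minor[of "-1"] w(2) by (simp only: complex_cnj_zero) Groebner_Basis.algebra
  with j1 show ?thesis by simp
qed

lemma B_entries: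
  assumes "v \<noteq> 0\<^sub>v n" "w \<noteq> 0\<^sub>v m" "i < n" "j < m"
  shows "e $ i0 * cnj (f $ j0) * B $$ (i, j)
    = e $ i0 * cnj (f $ j0) * (v $ i * cnj (w $ j)) + B $$ (i0, j0) * (e $ i * cnj (f $ j))"
proof -
  have "(f + w) $ j0 \<noteq> 0" using j0 w by simp
  then have fw: "f + w \<noteq> 0\<^sub>v m" using j0 by (metis index_zero_vec(1))
  have "1 \<cdot>\<^sub>m B = B" using v w by (intro eq_matI) auto
  then have "p (outer v f) (outer e (f + w)) = outer v f + B"
    using product_shift_right[OF v(1) w(1), of 1] by simp
  then have r: "crank n (outer e (f + w) + s \<cdot>\<^sub>m (outer v f + B)) \<le> 1" for s
    using crank_shift_left_le_1[OF _ fw] w by simp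
  have C: "outer e (f + w) + s \<cdot>\<^sub>m (outer v f + B) \<in> carrier_mat n m" for s using v w by simp
  have minor: "(e $ i0 * cnj (f $ j0) + s * B $$ (i0, j0))
      * (e $ i * (cnj (f $ j) + cnj (w $ j)) + s * (v $ i * cnj (f $ j) + B $$ (i, j)))
    = (e $ i0 * (cnj (f $ j) + cnj (w $ j)) + s * B $$ (i0, j))
      * (e $ i * cnj (f $ j0) + s * (v $ i * cnj (f $ j0) + B $$ (i, j0)))" for s
    using crank_le_1_minor[OF C r, where i = i0 and k = i and j = j0 and l = j]
      i0 j0 assms v w by simp
  show ?thesis
    using minor[of 1] minor[of "-1"]
      B_row_proportional[OF assms(1,4)] B_col_proportional[OF assms(2,3)]
    by Groebner_Basis.algebra
qed

lemma B_corner_zero: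
  assumes "v \<noteq> 0\<^sub>v n" "w \<noteq> 0\<^sub>v m"
  shows "B $$ (i0, j0) = 0"
proof -
  obtain i1 where i1: "i1 < n" "v $ i1 \<noteq> 0" using assms(1) v(1) vec_neq_zero_iff by blast
  obtain j1 where j1: "j1 < m" "w $ j1 \<noteq> 0" using assms(2) w(1) vec_neq_zero_iff by blast
  have "crank n B \<le> 1" using crank_product_outer_le_1 assms v w unit_nonzero by simp
  then have "B $$ (i0, j0) * B $$ (i1, j1) = B $$ (i0, j1) * B $$ (i1, j0)"
    using crank_le_1_minor[of B n m i0 i1 j0 j1] i0 i1 j0 j1 v w by simp
  then have "e $ i0 * cnj (f $ j0) * B $$ (i0, j0) * (v $ i1 * cnj (w $ j1)) = 0"
    using B_entries[OF assms i1(1) j1(1)]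
      B_row_proportional[OF assms(1) j1(1)] B_col_proportional[OF assms(2) i1(1)]
    by Groebner_Basis.algebra
  with i0 j0 i1 j1 show ?thesis by simp
qed

lemma product_outer_normalized: "B = outer v w"
proof (cases "v = 0\<^sub>v n \<or> w = 0\<^sub>v m")
  case True
  then show ?thesis
    using v w p_zero_left p_zero_right outer_zero_left[OF f_carrier] outer_zero_right[OF e_carrier]
      outer_zero_left[OF w(1)] outer_zero_right[OF v(1)] by auto
next
  case False
  then show ?thesis
    using B_entries B_corner_zero i0 j0 v w by (intro eq_matI) auto
qed

end

lemma product_outer:
  assumes v: "v \<in> carrier_vec n" and w: "w \<in> carrier_vec m"
  shows "p (outer v f) (outer e w) = outer v w"
proof -
  obtain i0 j0 where i0: "i0 < n" "e $ i0 \<noteq> 0" and j0: "j0 < m" "f $ j0 \<noteq> 0"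
    using unit_nonzero vec_neq_zero_iff e_carrier f_carrier by metis
  define a where "a = v $ i0 / e $ i0"
  define b where "b = w $ j0 / f $ j0"
  define v' where "v' = v - a \<cdot>\<^sub>v e"
  define w' where "w' = w - b \<cdot>\<^sub>v f"
  have v': "v' \<in> carrier_vec n" "v' $ i0 = 0" and w': "w' \<in> carrier_vec m" "w' $ j0 = 0"
    using v w i0 j0 unfolding v'_def w'_def a_def b_def by auto
  have "v = v' + a \<cdot>\<^sub>v e" "w = w' + b \<cdot>\<^sub>v f"
    unfolding v'_def w'_def using v w by (auto intro!: eq_vecI)
  then have "p (outer v f) (outer e w)
      = p (outer v' f) (outer e w') + a \<cdot>\<^sub>m outer e w' + cnj b \<cdot>\<^sub>m (outer v' f + a \<cdot>\<^sub>m outer e f)"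
    using v' w' by (simp add: outer_add_left outer_smult_left outer_add_right outer_smult_right
      p_add_left p_add_right p_smult_left p_smult_right)
  also have "\<dots> = outer (v' + a \<cdot>\<^sub>v e) (w' + b \<cdot>\<^sub>v f)"
    using product_outer_normalized[OF i0 j0 v' w'] v' w' by (intro eq_matI) (auto simp: algebra_simps)
  finally show ?thesis using \<open>v = v' + a \<cdot>\<^sub>v e\<close> \<open>w = w' + b \<cdot>\<^sub>v f\<close> by simp
qed

end

theorem mainTheorem1:
  fixes n m :: nat and p :: "complex mat \<Rightarrow> complex mat \<Rightarrow> complex mat"
    and e f v w :: "complex vec"
  assumes "ropp n m p"
    and "e \<in> carrier_vec n" and "f \<in> carrier_vec m"
    and "\<forall>A \<in> carrier_mat n m. p (outer e f) A = A \<and> p A (outer e f) = A"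
    and "v \<in> carrier_vec n" and "w \<in> carrier_vec m"
  shows "p (outer v f) (outer e w) = outer v w \<and> p (outer e w) (outer v f) = outer v w"
proof -
  obtain E where E: "E \<in> carrier_mat n m" "crank n E = 1"
    "\<forall>A \<in> carrier_mat n m. p E A = A \<and> p A E = A"
    using assms(1) unfolding ropp_def by blast
  have "E = outer e f"
    using E assms(2-4) by (metis outer_carrier)
  with E(2) have "crank n (outer e f) = 1" by simp
  with assms interpret unital_rank_one_preserving n m p e f
    unfolding ropp_def by unfold_locales auto
  interpret opposite: unital_rank_one_preserving n m "\<lambda>A B. p B A" e f
    by (rule opposite)
  show ?thesis
    using product_outer opposite.product_outer assms(5,6) by simp
qed

end
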